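(* Let $R$ be a commutative ring with unit, let $G=(V,E)$ be a finite digraph and $f:V\to[0,+\infty)$ a discrete Morse function on $G$ such that every vertex $v$ with $f(v)=0$ has out-degree $1$ and in-degree $1$. Let $\tilde G$ be the $\mathcal M$-collapse of $(G,f)$. Then the inclusion $i:\tilde G\to G$ induces isomorphisms $H_n(\tilde G;R)\xrightarrow{\cong}H_n(G;R)$ of path homology groups for all $n\ge0$.
   Context: A digraph $G=(V,E)$ consists of a set $V$ and $E\subseteq (V\times V)\setminus\{(v,v)\}$; $(u,v)\in E$ is written $u\to v$. The out-degree (in-degree) of $v$ is the number of edges starting (ending) at $v$. An allowed elementary $n$-path is a sequence $v_0\cdots v_n$ of vertices with $v_{i-1}\to v_i\in E$ for all $1\le i\le n$. For $n\ge0$, $\Lambda_n(V)$ is the free $R$-module on sequences $v_0\cdots v_n$ with $v_{i-1}\ne v_i$, with $\partial_n=\sum_{i=0}^n(-1)^id_i$, $d_i$ deleting $v_i$ and sequences with two equal consecutive entries taken to be $0$. $P_n(G)$ is the span of allowed elementary $n$-paths, $\Omega_n(G)=\{x\in P_n(G):\partial_nx\in P_{n-1}(G)\}$, and the path homology $H_n(G;R)$ is the homology of $(\Omega_*(G),\partial_* )$. For a subdigraph $\tilde G\subseteq G$, the inclusion induces the inclusion of chain complexes $\Omega_*(\tilde G)\subseteq\Omega_*(G)$ and hence maps on path homology. A map $f:V\to[0,+\infty)$ is a discrete Morse function on $G$ if for every allowed elementary path $v_0\cdots v_n$: (i) there is at most one index $i$ with $f(v_i)=0$ such that $v_0\cdots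 v_{i-1}v_{i+1}\cdots v_n$ is an allowed elementary path; (ii) there is at most one vertex $u$ with $f(u)=0$ such that for some $-1\le j\le n$, $v_0\cdots v_juv_{j+1}\cdots v_n$ (meaning $uv_0\cdots v_n$ if $j=-1$, $v_0\cdots v_nu$ if $j=n$) is an allowed elementary path. $\mathcal M$-collapse: under the degree hypothesis, each vertex $v$ with $f(v)=0$ has a unique in-neighbour $u$ and out-neighbour $w$ ($u\to v\to w$, with $u,v,w$ distinct). Let $Z$ be the set of zeros $v$ of $f$ for which $u\to w$ is also an edge of $G$. The $\mathcal M$-collapse $\tilde G$ has vertex set $V\setminus Z$ and edge set $E\setminus\{u\to v,\ v\to w: v\in Z\}$ (obtained by successively substituting each such $u\to v\to w$ by $u\to w$), and $\tilde f=f|_{V\setminus Z}$. *)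

theory Defs
  imports Complex_Main
begin

text \<open>A finite digraph: finite vertex set V, edge set E \<subseteq> V \<times> V without loops.
  Elementary sequences v0...vn are lists of length n+1.\<close>

definition finite_digraph :: "'a set \<Rightarrow> ('a \<times> 'a) set \<Rightarrow> bool" where
  "finite_digraph V E \<longleftrightarrow> finite V \<and> E \<subseteq> V \<times> V \<and> (\<forall>v. (v, v) \<notin> E)"

definition regular_seq :: "'a list \<Rightarrow> bool" where
  "regular_seq p \<longleftrightarrow> (\<forall>i. Suc i < length p \<longrightarrow> p ! i \<noteq> p ! Suc i)"

definition allowed_path :: "'a set \<Rightarrow> ('a \<times> 'a) set \<Rightarrow> 'a list \<Rightarrow> bool" where
  "allowed_path V E p \<longleftrightarrow> p \<noteq> [] \<and> set p \<subseteq> V \<and>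
      (\<forall>i. Suc i < length p \<longrightarrow> (p ! i, p ! Suc i) \<in> E)"

definition Lambda :: "'a set \<Rightarrow> nat \<Rightarrow> ('a list \<Rightarrow> 'r::comm_ring_1) set" where
  "Lambda V n = {x. \<forall>p. x p \<noteq> 0 \<longrightarrow> length p = Suc n \<and> set p \<subseteq> V \<and> regular_seq p}"

definition Pch :: "'a set \<Rightarrow> ('a \<times> 'a) set \<Rightarrow> nat \<Rightarrow> ('a list \<Rightarrow> 'r::comm_ring_1) set" where
  "Pch V E n = {x. \<forall>p. x p \<noteq> 0 \<longrightarrow> length p = Suc n \<and> allowed_path V E p}"

text \<open>Boundary \<partial>_n : \<Lambda>_n \<rightarrow> \<Lambda>_{n-1}, \<partial>_n = \<Sum>_i (-1)^i d_i, with \<partial>_0 = 0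
  (unreduced homology). The coefficient of a regular (n-1)-sequence w in \<partial>_n x is the
  signed sum of coefficients of the sequences obtained from w by inserting a vertex at
  position i; sequences with equal consecutive entries are 0.\<close>
definition bd :: "'a set \<Rightarrow> nat \<Rightarrow> ('a list \<Rightarrow> 'r::comm_ring_1) \<Rightarrow> ('a list \<Rightarrow> 'r)" where
  "bd V n x = (\<lambda>w. if n = 0 then 0
      else if length w = n \<and> regular_seq w
        then (\<Sum>i\<le>n. (-1) ^ i * (\<Sum>v\<in>V. x (take i w @ v # drop i w)))
        else 0)"

definition Omega :: "'a set \<Rightarrow> ('a \<times> 'a) set \<Rightarrow> nat \<Rightarrow> ('a list \<Rightarrow> 'r::comm_ring_1) set" where
  "Omega V E n = {x \<in> Pch V E n. bd V n x \<in> Pch V E (n - 1)}"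

definition cycles :: "'a set \<Rightarrow> ('a \<times> 'a) set \<Rightarrow> nat \<Rightarrow> ('a list \<Rightarrow> 'r::comm_ring_1) set" where
  "cycles V E n = {x \<in> Omega V E n. bd V n x = (\<lambda>_. 0)}"

definition boundaries :: "'a set \<Rightarrow> ('a \<times> 'a) set \<Rightarrow> nat \<Rightarrow> ('a list \<Rightarrow> 'r::comm_ring_1) set" where
  "boundaries V E n = bd V (Suc n) ` Omega V E (Suc n)"

definition hclass :: "'a set \<Rightarrow> ('a \<times> 'a) set \<Rightarrow> nat \<Rightarrow> ('a list \<Rightarrow> 'r::comm_ring_1) \<Rightarrow> ('a list \<Rightarrow> 'r) set" where
  "hclass V E n x = {y \<in> cycles V E n. (\<lambda>p. x p - y p) \<in> boundaries V E n}"

definition path_homology :: "'a set \<Rightarrow> ('a \<times> 'a) set \<Rightarrow> nat \<Rightarrow> ('a list \<Rightarrow> 'r::comm_ring_1) set set" where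
  "path_homology V E n = hclass V E n ` cycles V E n"

definition induced_map :: "'a set \<Rightarrow> ('a \<times> 'a) set \<Rightarrow> nat \<Rightarrow> ('a list \<Rightarrow> 'r::comm_ring_1) set \<Rightarrow> ('a list \<Rightarrow> 'r) set" where
  "induced_map V E n X = (\<Union>x\<in>X. hclass V E n x)"

definition discrete_morse :: "'a set \<Rightarrow> ('a \<times> 'a) set \<Rightarrow> ('a \<Rightarrow> real) \<Rightarrow> bool" where
  "discrete_morse V E f \<longleftrightarrow> (\<forall>v\<in>V. f v \<ge> 0) \<and>
    (\<forall>p. allowed_path V E p \<longrightarrow>
       (\<forall>i j. i < length p \<and> f (p ! i) = 0 \<and> allowed_path V E (take i p @ drop (Suc i) p) \<and>
              j < length p \<and> f (p ! j) = 0 \<and> allowed_path V E (take j p @ drop (Suc j) p)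
              \<longrightarrow> i = j) \<and>
       (\<forall>u u'. u \<in> V \<and> f u = 0 \<and> (\<exists>j\<le>length p. allowed_path V E (take j p @ u # drop j p)) \<and>
               u' \<in> V \<and> f u' = 0 \<and> (\<exists>j\<le>length p. allowed_path V E (take j p @ u' # drop j p))
              \<longrightarrow> u = u'))"

definition zero_deg_hyp :: "'a set \<Rightarrow> ('a \<times> 'a) set \<Rightarrow> ('a \<Rightarrow> real) \<Rightarrow> bool" where
  "zero_deg_hyp V E f \<longleftrightarrow> (\<forall>v\<in>V. f v = 0 \<longrightarrow>
      card {w. (v, w) \<in> E} = 1 \<and> card {u. (u, v) \<in> E} = 1)"

definition collapse_set :: "'a set \<Rightarrow> ('a \<times> 'a) set \<Rightarrow> ('a \<Rightarrow> real) \<Rightarrow> 'a set" where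
  "collapse_set V E f = {v \<in> V. f v = 0 \<and>
      (\<exists>u w. (u, v) \<in> E \<and> (v, w) \<in> E \<and> (u, w) \<in> E)}"

definition collapse_V :: "'a set \<Rightarrow> ('a \<times> 'a) set \<Rightarrow> ('a \<Rightarrow> real) \<Rightarrow> 'a set" where
  "collapse_V V E f = V - collapse_set V E f"

text \<open>Remove the edges u\<rightarrow>v and v\<rightarrow>w for v \<in> Z (under the degree hypothesis these
  are exactly the edges incident to v).\<close>
definition collapse_E :: "'a set \<Rightarrow> ('a \<times> 'a) set \<Rightarrow> ('a \<Rightarrow> real) \<Rightarrow> ('a \<times> 'a) set" where
  "collapse_E V E f = E - {(a, b) \<in> E. a \<in> collapse_set V E f \<or> b \<in> collapse_set V E f}"

end

theory Submission
  imports Defs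
begin

(* Every v \<in> Z has a unique in-neighbour u and out-neighbour w, and u \<rightarrow> w is an edge.
   Prepending u to the paths starting at v defines h : \<Omega>\<^sub>m(G) \<rightarrow> \<Omega>\<^sub>m\<^sub>+\<^sub>1(G), and for
   \<partial>-invariant x the chain x - \<partial>h x - h \<partial>x is supported on allowed paths of the collapse:
   the paths starting in Z and the paths u v ... cancel, and each path v w ... is replaced by u w ... .
   Everything else lies in the collapse because a \<partial>-invariant chain never visits Z beyond the
   second vertex: deleting the predecessor u of v from a u v ... leaves the non-allowed face a v ...,
   which no other path of the chain can cancel. So every cycle of G is homologous to a cycle of the
   collapse, and a cycle of the collapse that bounds c in G bounds c - \<partial>h c - h \<partial>c there. *)

section \<open>Sequences and allowed paths\<close>

definition insert_at :: "'a \<Rightarrow> nat \<Rightarrow> 'a list \<Rightarrow> 'a list" where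
  "insert_at a i w = take i w @ a # drop i w"

lemma insert_at_0 [simp]: "insert_at a 0 w = a # w"
  by (simp add: insert_at_def)

lemma insert_at_Suc_Cons [simp]: "insert_at a (Suc i) (b # w) = b # insert_at a i w"
  by (simp add: insert_at_def)

lemma length_insert_at [simp]: "i \<le> length w \<Longrightarrow> length (insert_at a i w) = Suc (length w)"
  by (simp add: insert_at_def)

lemma insert_at_append: "i \<le> length xs \<Longrightarrow> insert_at a i (xs @ ys) = insert_at a i xs @ ys"
  by (simp add: insert_at_def)

lemma insert_at_append_right: "insert_at a (length xs + j) (xs @ ys) = xs @ insert_at a j ys"
  by (simp add: insert_at_def)

lemma insert_at_insert_at:
  "i \<le> j \<Longrightarrow> j \<le> length w \<Longrightarrow>
    insert_at b (Suc j) (insert_at a i w) = insert_at a i (insert_at b j w)"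
proof (induction w arbitrary: i j)
  case (Cons c w)
  then show ?case by (cases i; cases j) auto
qed simp

lemma insert_at_nth_Suc: "i < length w \<Longrightarrow> insert_at (w ! i) (Suc i) w = insert_at (w ! i) i w"
proof (induction w arbitrary: i)
  case (Cons c w)
  then show ?case by (cases i) (auto simp: insert_at_def)
qed simp

lemma insert_at_keeps_adjacent:
  assumes "i \<noteq> Suc (length xs)"
  shows "\<exists>l1 l2. insert_at c i (xs @ a # b # ys) = l1 @ a # b # l2"
proof (cases "i \<le> length xs")
  case True
  then show ?thesis by (auto simp: insert_at_append)
next
  case False
  with assms have "i = length (xs @ [a, b]) + (i - Suc (Suc (length xs)))"
    by simp
  then show ?thesis by (metis append.assoc append_Cons append_Nil insert_at_append_right)
qed

lemma in_set_drop2_decomp: "v \<in> set (drop 2 p) \<Longrightarrow> \<exists>xs a u ys. p = xs @ a # u # v # ys"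
proof (induction p)
  case (Cons c p)
  then obtain d e p' where p: "p = d # e # p'"
    by (cases p rule: remdups_adj.cases) (auto simp: numeral_2_eq_2)
  show ?case
  proof (cases "v = e")
    case True
    then show ?thesis using p by (metis append_Nil)
  next
    case False
    then obtain xs a u ys where "p = xs @ a # u # v # ys"
      using Cons p by (auto simp: numeral_2_eq_2)
    then show ?thesis by (metis append_Cons)
  qed
qed simp

lemma regular_seq_iff_successively: "regular_seq p \<longleftrightarrow> successively (\<noteq>) p"
  by (simp add: regular_seq_def successively_conv_nth)

lemma regular_seq_simps [simp]:
  "regular_seq []" "regular_seq [a]" "regular_seq (a # b # w) \<longleftrightarrow> a \<noteq> b \<and> regular_seq (b # w)"
  by (simp_all add: regular_seq_iff_successively)

lemma regular_seq_insert_at: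
  assumes "regular_seq w" "i \<le> length w"
  shows "regular_seq (insert_at a i w) \<longleftrightarrow> (i = 0 \<or> a \<noteq> w ! (i - 1)) \<and> (i = length w \<or> a \<noteq> w ! i)"
proof -
  have "successively (\<noteq>) (take i w)" "successively (\<noteq>) (drop i w)"
    using assms(1) append_take_drop_id[of i w]
    by (metis regular_seq_iff_successively successively_append_iff)+
  moreover have "0 < i \<Longrightarrow> last (take i w) = w ! (i - 1)"
    using assms(2) by (cases i) (auto simp: take_Suc_conv_app_nth)
  moreover have "i < length w \<Longrightarrow> hd (drop i w) = w ! i"
    by (rule hd_drop_conv_nth)
  ultimately show ?thesis
    using assms(2) unfolding insert_at_def regular_seq_iff_successively
    by (auto simp: successively_append_iff successively_Cons)
qed

lemma allowed_path_iff_successively: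
  "allowed_path V E p \<longleftrightarrow> p \<noteq> [] \<and> set p \<subseteq> V \<and> successively (\<lambda>a b. (a, b) \<in> E) p"
  by (simp add: allowed_path_def successively_conv_nth)

lemma allowed_path_simps [simp]:
  "\<not> allowed_path V E []"
  "allowed_path V E [a] \<longleftrightarrow> a \<in> V"
  "allowed_path V E (a # b # w) \<longleftrightarrow> a \<in> V \<and> (a, b) \<in> E \<and> allowed_path V E (b # w)"
  by (auto simp: allowed_path_iff_successively)

lemma allowed_path_edge: "allowed_path V E (xs @ a # b # ys) \<Longrightarrow> (a, b) \<in> E"
  by (simp add: allowed_path_iff_successively successively_append_iff)

lemma allowed_path_regular: "(\<And>v. (v, v) \<notin> E) \<Longrightarrow> allowed_path V E p \<Longrightarrow> regular_seq p"
  by (induction p rule: remdups_adj.induct) auto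

section \<open>The boundary operator squares to zero\<close>

lemma sum_eq_single:
  assumes "finite A" "c \<in> A" "\<And>v. v \<in> A \<Longrightarrow> v \<noteq> c \<Longrightarrow> g v = 0"
  shows "sum g A = g c"
  using sum.mono_neutral_left[of A "{c}" g] assms by auto

definition bd_raw :: "'a set \<Rightarrow> nat \<Rightarrow> ('a list \<Rightarrow> 'r::comm_ring_1) \<Rightarrow> 'a list \<Rightarrow> 'r" where
  "bd_raw V n x w = (\<Sum>i\<le>n. (-1) ^ i * (\<Sum>v\<in>V. x (insert_at v i w)))"

lemma bd_eq_bd_raw:
  "bd V n x w = (if n = 0 then 0 else if length w = n \<and> regular_seq w then bd_raw V n x w else 0)"
  by (simp add: bd_def bd_raw_def insert_at_def)

lemma bd_diff: "bd V n (\<lambda>q. x q - y q) = (\<lambda>q. bd V n x q - bd V n y q)"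
  by (auto simp: bd_def sum_subtractf right_diff_distrib)

lemma bd_zero: "bd V n (\<lambda>_. 0) = (\<lambda>_. 0)"
  by (auto simp: bd_def)

lemma sum_atMost_triangle_swap:
  fixes g :: "nat \<Rightarrow> nat \<Rightarrow> 'b::comm_monoid_add"
  shows "(\<Sum>i\<le>n. \<Sum>j\<le>i. g i j) = (\<Sum>j\<le>n. \<Sum>i\<in>{j..n}. g i j)"
proof (induction n)
  case (Suc n)
  have "(\<Sum>j\<le>n. \<Sum>i\<in>{j..Suc n}. g i j) = (\<Sum>j\<le>n. (\<Sum>i\<in>{j..n}. g i j) + g (Suc n) j)"
    by (intro sum.cong) (auto simp: atLeastAtMostSuc_conv add.commute)
  then show ?case
    using Suc by (simp add: sum.distrib add.assoc)
qed simp

lemma sum_atMost_Suc_split: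
  fixes h :: "nat \<Rightarrow> 'b::comm_monoid_add"
  assumes "i \<le> n"
  shows "(\<Sum>j\<le>Suc n. h j) = (\<Sum>j\<le>i. h j) + (\<Sum>j\<in>{i..n}. h (Suc j))"
proof -
  have "{..Suc n} = {..i} \<union> {Suc i..Suc n}"
    using assms by auto
  then have "(\<Sum>j\<le>Suc n. h j) = (\<Sum>j\<le>i. h j) + (\<Sum>j\<in>{Suc i..Suc n}. h j)"
    by (simp add: sum.union_disjoint)
  also have "(\<Sum>j\<in>{Suc i..Suc n}. h j) = (\<Sum>j\<in>{i..n}. h (Suc j))"
    by (rule sum.shift_bounds_cl_Suc_ivl)
  finally show ?thesis .
qed

text \<open>The simplicial identity \<open>insert_at_insert_at\<close> pairs off the terms with opposite signs.\<close>
lemma bd_raw_bd_raw: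
  assumes "length w = n"
  shows "bd_raw V n (bd_raw V (Suc n) x) w = 0"
proof -
  define F where "F i j = (\<Sum>a\<in>V. \<Sum>b\<in>V. x (insert_at b j (insert_at a i w)))" for i j
  define K where "K i j = (\<Sum>a\<in>V. \<Sum>b\<in>V. x (insert_at a i (insert_at b j w)))" for i j
  have F_K: "F i j = K j i" for i j
    unfolding F_def K_def by (rule sum.swap)
  have F_K_Suc: "F i (Suc j) = K i j" if "i \<le> j" "j \<le> n" for i j
    unfolding F_def K_def using that assms by (simp add: insert_at_insert_at)
  have "bd_raw V n (bd_raw V (Suc n) x) w = (\<Sum>i\<le>n. \<Sum>j\<le>Suc n. (-1) ^ i * (-1) ^ j * F i j)"
  proof -
    have "(\<Sum>a\<in>V. \<Sum>j\<le>Suc n. (-1) ^ j * (\<Sum>b\<in>V. x (insert_at b j (insert_at a i w))))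
        = (\<Sum>j\<le>Suc n. (-1) ^ j * F i j)" for i
      unfolding F_def sum_distrib_left by (rule sum.swap)
    then show ?thesis
      unfolding bd_raw_def by (simp only: sum_distrib_left mult.assoc)
  qed
  also have "\<dots> = (\<Sum>i\<le>n. (\<Sum>j\<le>i. (-1) ^ i * (-1) ^ j * K j i)
                       + (\<Sum>j\<in>{i..n}. (-1) ^ i * (-1) ^ Suc j * K i j))"
  proof (intro sum.cong refl)
    fix i assume i: "i \<in> {..n}"
    have shifted: "(\<Sum>j\<in>{i..n}. (-1) ^ i * (-1) ^ Suc j * F i (Suc j))
        = (\<Sum>j\<in>{i..n}. (-1) ^ i * (-1) ^ Suc j * K i j)"
      using i by (intro sum.cong refl) (simp add: F_K_Suc)
    show "(\<Sum>j\<le>Suc n. (-1) ^ i * (-1) ^ j * F i j)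
        = (\<Sum>j\<le>i. (-1) ^ i * (-1) ^ j * K j i) + (\<Sum>j\<in>{i..n}. (-1) ^ i * (-1) ^ Suc j * K i j)"
      using i unfolding sum_atMost_Suc_split[of i n, OF i[simplified]] shifted by (simp only: F_K)
  qed
  also have "\<dots> = (\<Sum>i\<le>n. \<Sum>j\<le>i. (-1) ^ i * (-1) ^ j * K j i)
                 + (\<Sum>i\<le>n. \<Sum>j\<in>{i..n}. (-1) ^ i * (-1) ^ Suc j * K i j)"
    by (rule sum.distrib)
  also have "(\<Sum>i\<le>n. \<Sum>j\<le>i. (-1) ^ i * (-1) ^ j * K j i)
      = (\<Sum>j\<le>n. \<Sum>i\<in>{j..n}. (-1) ^ i * (-1) ^ j * K j i)"
    by (rule sum_atMost_triangle_swap)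
  also have "(\<Sum>i\<le>n. \<Sum>j\<in>{i..n}. (-1) ^ i * (-1) ^ Suc j * K i j)
      = - (\<Sum>j\<le>n. \<Sum>i\<in>{j..n}. (-1) ^ i * (-1) ^ j * K j i)"
    by (simp add: sum_negf[symmetric] mult.commute mult.left_commute)
  finally show ?thesis
    by simp
qed

text \<open>Inserting a copy of a neighbour at either side of it gives the same degenerate
  sequence, with opposite signs.\<close>
lemma bd_raw_degenerate:
  assumes "finite V" "regular_seq w" "length w = n"
  shows "bd_raw V n (\<lambda>s. if regular_seq s then 0 else y s) w = 0"
proof -
  define A where "A i = (if 0 < i \<and> w ! (i - 1) \<in> V then y (insert_at (w ! (i - 1)) i w) else 0)" for i
  define B where "B i = (if i < n \<and> w ! i \<in> V then y (insert_at (w ! i) i w) else 0)" for i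
  have "(\<Sum>a\<in>V. if regular_seq (insert_at a i w) then 0 else y (insert_at a i w)) = A i + B i"
    if "i \<le> n" for i
  proof -
    have "0 < i \<Longrightarrow> i < n \<Longrightarrow> w ! (i - 1) \<noteq> w ! i"
      using assms(2,3) unfolding regular_seq_def by (metis Suc_diff_1 Suc_lessD)
    then have "(\<Sum>a\<in>V. if regular_seq (insert_at a i w) then 0 else y (insert_at a i w)) =
      (\<Sum>a\<in>V. (if a = w ! (i - 1) then (if 0 < i then y (insert_at a i w) else 0) else 0)
             + (if a = w ! i then (if i < n then y (insert_at a i w) else 0) else 0))"
      using that assms(3) by (intro sum.cong refl) (auto simp: regular_seq_insert_at[OF assms(2)])
    then show ?thesis
      using assms(1) by (simp add: sum.distrib A_def B_def)
  qed
  then have "bd_raw V n (\<lambda>s. if regular_seq s then 0 else y s) w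
      = (\<Sum>i\<le>n. (-1) ^ i * A i) + (\<Sum>i\<le>n. (-1) ^ i * B i)"
    unfolding bd_raw_def by (simp add: distrib_left sum.distrib)
  also have "(\<Sum>i\<le>n. (-1) ^ i * A i) = (\<Sum>i<n. (-1) ^ Suc i * A (Suc i))"
    by (simp add: sum.atMost_shift A_def)
  also have "\<dots> = - (\<Sum>i<n. (-1) ^ i * B i)"
    unfolding sum_negf[symmetric]
    by (intro sum.cong refl) (simp add: A_def B_def insert_at_nth_Suc assms(3))
  also have "(\<Sum>i\<le>n. (-1) ^ i * B i) = (\<Sum>i<n. (-1) ^ i * B i)"
    by (simp add: lessThan_Suc_atMost[symmetric] B_def)
  finally show ?thesis
    by simp
qed

lemma bd_raw_cong:
  assumes "\<And>s. length s = Suc n \<Longrightarrow> x s = y s" "length w = n"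
  shows "bd_raw V n x w = bd_raw V n y w"
  unfolding bd_raw_def using assms by (intro sum.cong refl arg_cong2[where f = "(*)"]) auto

lemma bd_bd:
  assumes "finite V"
  shows "bd V n (bd V (Suc n) x) = (\<lambda>_. 0)"
proof
  fix w
  show "bd V n (bd V (Suc n) x) w = 0"
  proof (cases "n \<noteq> 0 \<and> length w = n \<and> regular_seq w")
    case True
    have "bd V (Suc n) x s = bd_raw V (Suc n) x s - (if regular_seq s then 0 else bd_raw V (Suc n) x s)"
      if "length s = Suc n" for s
      using that by (simp add: bd_eq_bd_raw)
    then have "bd V n (bd V (Suc n) x) w
        = bd_raw V n (\<lambda>s. bd_raw V (Suc n) x s - (if regular_seq s then 0 else bd_raw V (Suc n) x s)) w"
      using True by (simp add: bd_eq_bd_raw) (rule bd_raw_cong, simp_all add: bd_eq_bd_raw)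
    also have "\<dots> = bd_raw V n (bd_raw V (Suc n) x) w
          - bd_raw V n (\<lambda>s. if regular_seq s then 0 else bd_raw V (Suc n) x s) w"
      by (simp add: bd_raw_def sum_subtractf right_diff_distrib)
    also have "\<dots> = 0"
      using True bd_raw_bd_raw[of w n V x] bd_raw_degenerate[OF assms, of w n] by simp
    finally show ?thesis .
  qed (auto simp: bd_eq_bd_raw)
qed

section \<open>Path homology of a subgraph\<close>

lemma Pch_diff: "x \<in> Pch V E n \<Longrightarrow> y \<in> Pch V E n \<Longrightarrow> (\<lambda>q. x q - y q) \<in> Pch V E n"
  by (auto simp: Pch_def) (metis diff_self)+

lemma Pch_zero: "(\<lambda>_. 0) \<in> Pch V E n"
  by (simp add: Pch_def)

lemma Omega_diff: "x \<in> Omega V E n \<Longrightarrow> y \<in> Omega V E n \<Longrightarrow> (\<lambda>q. x q - y q) \<in> Omega V E n"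
  by (auto simp: Omega_def bd_diff intro: Pch_diff)

lemma Omega_zero: "(\<lambda>_. 0) \<in> Omega V E n"
  by (simp add: Omega_def bd_zero Pch_zero)

lemma cycles_diff: "x \<in> cycles V E n \<Longrightarrow> y \<in> cycles V E n \<Longrightarrow> (\<lambda>q. x q - y q) \<in> cycles V E n"
  by (auto simp: cycles_def bd_diff intro: Omega_diff)

lemma boundaries_diff:
  assumes "x \<in> boundaries V E n" "y \<in> boundaries V E n"
  shows "(\<lambda>q. x q - y q) \<in> boundaries V E n"
proof -
  obtain a b where "a \<in> Omega V E (Suc n)" "b \<in> Omega V E (Suc n)"
    and "x = bd V (Suc n) a" "y = bd V (Suc n) b"
    using assms by (auto simp: boundaries_def)
  then show ?thesis
    unfolding boundaries_def by (intro image_eqI[of _ _ "\<lambda>q. a q - b q"]) (auto simp: bd_diff Omega_diff)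
qed

lemma boundaries_zero: "(\<lambda>_. 0) \<in> boundaries V E n"
  unfolding boundaries_def by (rule image_eqI[of _ _ "\<lambda>_. 0"]) (simp_all add: bd_zero Omega_zero)

lemma boundaries_add:
  assumes "x \<in> boundaries V E n" "y \<in> boundaries V E n"
  shows "(\<lambda>q. x q + y q) \<in> boundaries V E n"
  using boundaries_diff[OF assms(1) boundaries_diff[OF boundaries_zero assms(2)]] by simp

lemma hclass_self: "x \<in> cycles V E n \<Longrightarrow> x \<in> hclass V E n x"
  by (simp add: hclass_def boundaries_zero)

lemma hclass_eq_iff:
  assumes "x \<in> cycles V E n" "y \<in> cycles V E n"
  shows "hclass V E n x = hclass V E n y \<longleftrightarrow> (\<lambda>p. x p - y p) \<in> boundaries V E n"
proof
  assume "hclass V E n x = hclass V E n y"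
  then have "(\<lambda>p. y p - x p) \<in> boundaries V E n"
    using hclass_self[OF assms(1)] by (simp add: hclass_def)
  from boundaries_diff[OF boundaries_zero this] show "(\<lambda>p. x p - y p) \<in> boundaries V E n"
    by simp
next
  assume xy: "(\<lambda>p. x p - y p) \<in> boundaries V E n"
  have "(\<lambda>p. x p - t p) \<in> boundaries V E n \<longleftrightarrow> (\<lambda>p. y p - t p) \<in> boundaries V E n" for t
  proof
    assume "(\<lambda>p. x p - t p) \<in> boundaries V E n"
    from boundaries_diff[OF this xy] show "(\<lambda>p. y p - t p) \<in> boundaries V E n"
      by simp
  next
    assume "(\<lambda>p. y p - t p) \<in> boundaries V E n"
    from boundaries_add[OF xy this] show "(\<lambda>p. x p - t p) \<in> boundaries V E n"
      by simp
  qed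
  then show "hclass V E n x = hclass V E n y"
    by (simp add: hclass_def)
qed

locale subgraph =
  fixes V :: "'a set" and E :: "('a \<times> 'a) set" and V' E'
  assumes finite_V: "finite V" and sub_V: "V' \<subseteq> V" and sub_E: "E' \<subseteq> E"
begin

lemma allowed_path_mono: "allowed_path V' E' p \<Longrightarrow> allowed_path V E p"
  using sub_V sub_E by (auto simp: allowed_path_def)

lemma Pch_mono: "Pch V' E' n \<subseteq> Pch V E n"
  by (auto simp: Pch_def allowed_path_mono)

lemma bd_sub:
  assumes "x \<in> Pch V' E' m"
  shows "bd V n x = bd V' n x"
proof -
  have "x (insert_at v i w) = 0" if "v \<in> V - V'" for v i w
    using assms that by (auto simp: Pch_def allowed_path_def insert_at_def)
  then have "(\<Sum>v\<in>V. x (insert_at v i w)) = (\<Sum>v\<in>V'. x (insert_at v i w))" for i w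
    by (intro sum.mono_neutral_right[OF finite_V sub_V]) blast
  then show ?thesis
    by (intro ext) (simp add: bd_eq_bd_raw bd_raw_def)
qed

lemma Omega_mono: "Omega V' E' n \<subseteq> Omega V E n"
proof
  fix x :: "'a list \<Rightarrow> 'r::comm_ring_1"
  assume "x \<in> Omega V' E' n"
  then show "x \<in> Omega V E n"
    using Pch_mono bd_sub[of x n n] by (auto simp: Omega_def)
qed

lemma cycles_mono: "cycles V' E' n \<subseteq> cycles V E n"
  using Omega_mono bd_sub by (fastforce simp: cycles_def Omega_def)

lemma boundaries_mono: "boundaries V' E' n \<subseteq> boundaries V E n"
proof
  fix z :: "'a list \<Rightarrow> 'r::comm_ring_1"
  assume "z \<in> boundaries V' E' n"
  then obtain c where c: "c \<in> Omega V' E' (Suc n)" "z = bd V' (Suc n) c"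
    by (auto simp: boundaries_def)
  then have "z = bd V (Suc n) c"
    using bd_sub[of c "Suc n" "Suc n"] by (simp add: Omega_def)
  then show "z \<in> boundaries V E n"
    using c(1) Omega_mono unfolding boundaries_def by blast
qed

lemma induced_map_hclass:
  assumes "x \<in> cycles V' E' n"
  shows "induced_map V E n (hclass V' E' n x) = hclass V E n x"
proof -
  have "hclass V E n y = hclass V E n x" if "y \<in> hclass V' E' n x" for y
  proof -
    have "y \<in> cycles V E n" "(\<lambda>p. x p - y p) \<in> boundaries V E n"
      using that cycles_mono boundaries_mono by (auto simp: hclass_def)
    then show ?thesis
      using hclass_eq_iff[OF subsetD[OF cycles_mono assms]] by metis
  qed
  then show ?thesis
    using hclass_self[OF assms] unfolding induced_map_def by blast
qed

lemma bij_betw_induced_map: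
  assumes surj: "\<And>z :: 'a list \<Rightarrow> 'r::comm_ring_1. z \<in> cycles V E n \<Longrightarrow> \<exists>z'\<in>cycles V' E' n. (\<lambda>p. z p - z' p) \<in> boundaries V E n"
    and inj: "\<And>z :: 'a list \<Rightarrow> 'r. z \<in> cycles V' E' n \<Longrightarrow> z \<in> boundaries V E n \<Longrightarrow> z \<in> boundaries V' E' n"
  shows "bij_betw (induced_map V E n)
    (path_homology V' E' n :: ('a list \<Rightarrow> 'r) set set) (path_homology V E n)"
  unfolding bij_betw_def
proof
  show "inj_on (induced_map V E n) (path_homology V' E' n :: ('a list \<Rightarrow> 'r) set set)"
  proof (rule inj_onI)
    fix X Y :: "('a list \<Rightarrow> 'r) set"
    assume "X \<in> path_homology V' E' n" "Y \<in> path_homology V' E' n"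
      and eq: "induced_map V E n X = induced_map V E n Y"
    then obtain x y where x: "x \<in> cycles V' E' n" "X = hclass V' E' n x"
      and y: "y \<in> cycles V' E' n" "Y = hclass V' E' n y"
      by (auto simp: path_homology_def)
    have "hclass V E n x = hclass V E n y"
      using eq x y by (simp add: induced_map_hclass)
    then have "(\<lambda>p. x p - y p) \<in> boundaries V E n"
      using hclass_eq_iff[OF subsetD[OF cycles_mono x(1)] subsetD[OF cycles_mono y(1)]] by simp
    then have "(\<lambda>p. x p - y p) \<in> boundaries V' E' n"
      using inj[OF cycles_diff[OF x(1) y(1)]] by simp
    then show "X = Y"
      using hclass_eq_iff[OF x(1) y(1)] x(2) y(2) by simp
  qed
  show "induced_map V E n ` (path_homology V' E' n :: ('a list \<Rightarrow> 'r) set set) = path_homology V E n"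
  proof
    show "induced_map V E n ` path_homology V' E' n \<subseteq> (path_homology V E n :: ('a list \<Rightarrow> 'r) set set)"
      using induced_map_hclass cycles_mono by (fastforce simp: path_homology_def)
  next
    show "path_homology V E n \<subseteq> induced_map V E n ` (path_homology V' E' n :: ('a list \<Rightarrow> 'r) set set)"
    proof
      fix X :: "('a list \<Rightarrow> 'r) set"
      assume "X \<in> path_homology V E n"
      then obtain z where z: "z \<in> cycles V E n" "X = hclass V E n z"
        by (auto simp: path_homology_def)
      then obtain z' where z': "z' \<in> cycles V' E' n" "(\<lambda>p. z p - z' p) \<in> boundaries V E n"
        using surj by blast
      have "X = hclass V E n z'"
        using z z' hclass_eq_iff[OF z(1) subsetD[OF cycles_mono z'(1)]] by simp
      also have "\<dots> = induced_map V E n (hclass V' E' n z')"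
        by (simp add: induced_map_hclass z'(1))
      finally have "X = induced_map V E n (hclass V' E' n z')" .
      then show "X \<in> induced_map V E n ` path_homology V' E' n"
        using z'(1) by (auto simp: path_homology_def)
    qed
  qed
qed

end

section \<open>The chain homotopy of the collapse\<close>

lemma Pch_vanishes_off_edge: "x \<in> Pch V E m \<Longrightarrow> (a, b) \<notin> E \<Longrightarrow> x (xs @ a # b # ys) = 0"
  using allowed_path_edge by (fastforce simp: Pch_def)

locale collapse =
  fixes V :: "'a set" and E :: "('a \<times> 'a) set" and f :: "'a \<Rightarrow> real"
  assumes digraph: "finite_digraph V E" and degrees: "zero_deg_hyp V E f"
begin

abbreviation "Z \<equiv> collapse_set V E f"
abbreviation "V' \<equiv> collapse_V V E f"
abbreviation "E' \<equiv> collapse_E V E f"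

definition in_nbr :: "'a \<Rightarrow> 'a" where
  "in_nbr v = (THE u. (u, v) \<in> E)"

definition out_nbr :: "'a \<Rightarrow> 'a" where
  "out_nbr v = (THE w. (v, w) \<in> E)"

lemma edge_in_V: "(a, b) \<in> E \<Longrightarrow> a \<in> V \<and> b \<in> V"
  using digraph by (auto simp: finite_digraph_def)

lemma no_loop: "(v, v) \<notin> E"
  using digraph by (simp add: finite_digraph_def)

lemma
  assumes "v \<in> Z"
  shows in_nbr_edge: "(in_nbr v, v) \<in> E"
    and out_nbr_edge: "(v, out_nbr v) \<in> E"
    and in_nbr_unique: "(u, v) \<in> E \<Longrightarrow> u = in_nbr v"
    and out_nbr_unique: "(v, w) \<in> E \<Longrightarrow> w = out_nbr v"
    and in_out_nbr_edge: "(in_nbr v, out_nbr v) \<in> E"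
proof -
  have "card {w. (v, w) \<in> E} = 1" "card {u. (u, v) \<in> E} = 1"
    using assms degrees by (auto simp: zero_deg_hyp_def collapse_set_def)
  then obtain w0 u0 where w0: "{w. (v, w) \<in> E} = {w0}" and u0: "{u. (u, v) \<in> E} = {u0}"
    by (meson card_1_singletonE)
  then have "out_nbr v = w0" "in_nbr v = u0"
    by (auto simp: out_nbr_def in_nbr_def)
  with u0 w0 show "(in_nbr v, v) \<in> E" "(v, out_nbr v) \<in> E"
    and in_unique: "\<And>u. (u, v) \<in> E \<Longrightarrow> u = in_nbr v"
    and out_unique: "\<And>w. (v, w) \<in> E \<Longrightarrow> w = out_nbr v"
    by auto
  obtain u w where "(u, v) \<in> E" "(v, w) \<in> E" "(u, w) \<in> E"
    using assms by (auto simp: collapse_set_def)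
  with in_unique out_unique show "(in_nbr v, out_nbr v) \<in> E"
    by metis
qed

lemma in_nbr_in_V: "v \<in> Z \<Longrightarrow> in_nbr v \<in> V"
  using in_nbr_edge edge_in_V by blast

lemma in_nbr_notin_Z: "v \<in> Z \<Longrightarrow> in_nbr v \<notin> Z"
  by (metis in_nbr_edge in_out_nbr_edge no_loop out_nbr_edge out_nbr_unique)

lemma out_nbr_notin_Z: "v \<in> Z \<Longrightarrow> out_nbr v \<notin> Z"
  by (metis in_nbr_edge in_out_nbr_edge in_nbr_unique no_loop out_nbr_edge)

sublocale subgraph V E V' E'
  using digraph by unfold_locales (auto simp: finite_digraph_def collapse_V_def collapse_E_def)

lemma allowed_path_collapse: "allowed_path V' E' p \<longleftrightarrow> allowed_path V E p \<and> set p \<inter> Z = {}"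
  unfolding allowed_path_def collapse_V_def collapse_E_def by (auto simp: subset_iff disjoint_iff)

definition in_nbr_prefixed :: "'a list \<Rightarrow> bool" where
  "in_nbr_prefixed q \<longleftrightarrow> (case q of b # c # _ \<Rightarrow> c \<in> Z \<and> b = in_nbr c | _ \<Rightarrow> False)"

lemma in_nbr_prefixed_simps [simp]:
  "\<not> in_nbr_prefixed []" "\<not> in_nbr_prefixed [b]" "in_nbr_prefixed (b # c # r) \<longleftrightarrow> c \<in> Z \<and> b = in_nbr c"
  by (simp_all add: in_nbr_prefixed_def)

text \<open>The chain homotopy: a path \<open>c r\<close> with \<open>c \<in> Z\<close> is sent to \<open>(in_nbr c) c r\<close>.\<close>
definition htpy :: "('a list \<Rightarrow> 'r::zero) \<Rightarrow> 'a list \<Rightarrow> 'r" where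
  "htpy x q = (if in_nbr_prefixed q then x (tl q) else 0)"

lemma htpy_simps [simp]:
  "htpy x [] = 0" "htpy x [b] = 0" "htpy x (b # c # r) = (if c \<in> Z \<and> b = in_nbr c then x (c # r) else 0)"
  by (simp_all add: htpy_def)

lemma htpy_zero: "htpy (\<lambda>_. 0) = (\<lambda>_. 0)"
  by (simp add: htpy_def fun_eq_iff)

lemma htpy_Pch: "x \<in> Pch V E m \<Longrightarrow> htpy x \<in> Pch V E (Suc m)"
  unfolding Pch_def
proof clarify
  fix q
  assume x: "\<forall>p. x p \<noteq> 0 \<longrightarrow> length p = Suc m \<and> allowed_path V E p" and q: "htpy x q \<noteq> 0"
  then have "in_nbr_prefixed q" "x (tl q) \<noteq> 0"
    by (auto simp: htpy_def split: if_splits)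
  then obtain c r where "q = in_nbr c # c # r" "c \<in> Z" "x (c # r) \<noteq> 0"
    by (cases q rule: remdups_adj.cases) auto
  then show "length q = Suc (Suc m) \<and> allowed_path V E q"
    using x in_nbr_edge in_nbr_in_V by auto
qed

lemma htpy_vanishes:
  assumes "x \<in> Pch V' E' m"
  shows "htpy x = (\<lambda>_. 0)"
proof
  fix q
  show "htpy x q = 0"
  proof (cases "in_nbr_prefixed q")
    case True
    then obtain b c r where "q = b # c # r" "c \<in> Z"
      by (cases q rule: remdups_adj.cases) auto
    then have "\<not> allowed_path V' E' (tl q)"
      by (simp add: allowed_path_collapse)
    then show ?thesis
      using assms by (auto simp: htpy_def Pch_def)
  qed (simp add: htpy_def)
qed

lemma bd_htpy:
  assumes "regular_seq (q0 # r)" "length r = m"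
  shows "bd V (Suc m) (htpy x) (q0 # r) =
      (if q0 \<in> Z then x (q0 # r) else 0)
      - (\<Sum>a\<in>V. if a \<in> Z \<and> q0 = in_nbr a then x (a # r) else 0)
      + (if in_nbr_prefixed (q0 # r) then (\<Sum>i<m. (-1) ^ i * (\<Sum>v\<in>V. x (insert_at v (Suc i) r))) else 0)"
proof -
  have first_two: "(\<Sum>i\<le>Suc m. g i) = g 0 + g 1 + (\<Sum>i<m. g (Suc (Suc i)))" for g :: "nat \<Rightarrow> 'b"
    by (simp only: sum.atMost_Suc_shift) (simp only: sum.atMost_shift add.assoc One_nat_def)
  have "bd V (Suc m) (htpy x) (q0 # r)
      = (\<Sum>v\<in>V. htpy x (v # q0 # r)) - (\<Sum>v\<in>V. htpy x (q0 # v # r))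
        + (\<Sum>i<m. (-1) ^ i * (\<Sum>v\<in>V. htpy x (insert_at v (Suc (Suc i)) (q0 # r))))"
    using assms unfolding bd_eq_bd_raw bd_raw_def first_two by simp
  also have "(\<Sum>v\<in>V. htpy x (v # q0 # r)) = (if q0 \<in> Z then x (q0 # r) else 0)"
  proof -
    have "htpy x (v # q0 # r) = (if v = in_nbr q0 then (if q0 \<in> Z then x (q0 # r) else 0) else 0)" for v
      by auto
    then show ?thesis
      using in_nbr_in_V by (simp add: finite_V)
  qed
  also have "(\<Sum>v\<in>V. htpy x (q0 # v # r)) = (\<Sum>a\<in>V. if a \<in> Z \<and> q0 = in_nbr a then x (a # r) else 0)"
    by simp
  also have "(\<Sum>i<m. (-1) ^ i * (\<Sum>v\<in>V. htpy x (insert_at v (Suc (Suc i)) (q0 # r))))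
      = (if in_nbr_prefixed (q0 # r) then (\<Sum>i<m. (-1) ^ i * (\<Sum>v\<in>V. x (insert_at v (Suc i) r))) else 0)"
    using assms(2) by (cases r; cases "in_nbr_prefixed (q0 # r)") auto
  finally show ?thesis .
qed

lemma htpy_bd:
  assumes x: "x \<in> Pch V E m" and "regular_seq (q0 # r)" "length r = m"
  shows "htpy (bd V m x) (q0 # r) = (if in_nbr_prefixed (q0 # r)
      then x (q0 # r) - (\<Sum>i<m. (-1) ^ i * (\<Sum>v\<in>V. x (insert_at v (Suc i) r))) else 0)"
proof (cases "in_nbr_prefixed (q0 # r)")
  case True
  then obtain c r' where r: "r = c # r'" and c: "c \<in> Z" "q0 = in_nbr c"
    by (cases r) auto
  have "bd V m x r = (\<Sum>v\<in>V. x (v # r)) - (\<Sum>i<m. (-1) ^ i * (\<Sum>v\<in>V. x (insert_at v (Suc i) r)))"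
    using assms(2,3) r by (simp add: bd_eq_bd_raw bd_raw_def sum.atMost_shift sum_negf)
  also have "(\<Sum>v\<in>V. x (v # r)) = x (q0 # r)"
  proof (rule sum_eq_single[OF finite_V])
    show "q0 \<in> V"
      using c in_nbr_in_V by simp
    fix v
    assume "v \<in> V" "v \<noteq> q0"
    then have "\<not> allowed_path V E (v # r)"
      using c r in_nbr_unique by auto
    then show "x (v # r) = 0"
      using x by (auto simp: Pch_def)
  qed
  finally show ?thesis
    using True by (simp add: htpy_def)
qed (simp add: htpy_def)

lemma homotopy_formula:
  assumes "x \<in> Pch V E m" "regular_seq (q0 # r)" "length r = m"
  shows "x (q0 # r) - bd V (Suc m) (htpy x) (q0 # r) - htpy (bd V m x) (q0 # r)
    = (if q0 \<in> Z \<or> in_nbr_prefixed (q0 # r) then 0 else x (q0 # r))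
      + (\<Sum>a\<in>V. if a \<in> Z \<and> q0 = in_nbr a then x (a # r) else 0)"
proof -
  have "\<not> (q0 \<in> Z \<and> in_nbr_prefixed (q0 # r))"
    using in_nbr_notin_Z by (cases r) auto
  then show ?thesis
    unfolding bd_htpy[OF assms(2,3)] htpy_bd[OF assms] by (auto simp: algebra_simps)
qed


text \<open>Deleting \<open>u = in_nbr v\<close> from a path \<open>\<dots> a u v \<dots>\<close> gives a face \<open>\<dots> a v \<dots>\<close> that is not
  allowed and arises from no other path of the chain, so \<open>\<partial>\<close>-invariance forbids such paths.\<close>
lemma Omega_vanishes_through_Z:
  assumes x: "x \<in> Omega V E m" and v: "v \<in> Z"
  shows "x (xs @ a # u # v # ys) = 0"
proof (rule ccontr)
  define p where "p = xs @ a # u # v # ys"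
  define w where "w = xs @ a # v # ys"
  assume "x (xs @ a # u # v # ys) \<noteq> 0"
  then have nz: "x p \<noteq> 0"
    by (simp add: p_def)
  have xP: "x \<in> Pch V E m" and bdP: "bd V m x \<in> Pch V E (m - 1)"
    using x by (auto simp: Omega_def)
  then have p: "allowed_path V E p" "length p = Suc m"
    using nz by (auto simp: Pch_def)
  then have "(a, u) \<in> E" "(u, v) \<in> E"
    using allowed_path_edge[of V E xs] allowed_path_edge[of V E "xs @ [a]"] by (auto simp: p_def)
  then have u: "u = in_nbr v" "u \<in> V" and av: "(a, v) \<notin> E" and "a \<noteq> v"
    using in_nbr_unique[OF v] out_nbr_unique[OF v] in_out_nbr_edge[OF v] edge_in_V no_loop by metis+
  have "regular_seq p"
    using p(1) allowed_path_regular no_loop by blast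
  then have w_regular: "regular_seq w"
    using \<open>a \<noteq> v\<close> by (simp add: p_def w_def regular_seq_iff_successively successively_append_iff)
  have w_length: "length w = m" "m \<noteq> 0"
    using p(2) by (auto simp: p_def w_def)
  have face: "(-1) ^ i * (\<Sum>b\<in>V. x (insert_at b i w))
      = (if i = Suc (length xs) then (-1) ^ Suc (length xs) * x p else 0)" for i
  proof (cases "i = Suc (length xs)")
    case True
    then have ins: "insert_at b i w = (xs @ [a]) @ b # v # ys" for b
      using insert_at_append_right[of b xs 1 "a # v # ys"] by (simp add: w_def)
    have "(\<Sum>b\<in>V. x (insert_at b i w)) = x (insert_at u i w)"
      using Pch_vanishes_off_edge[OF xP] in_nbr_unique[OF v] u unfolding ins
      by (intro sum_eq_single[OF finite_V]) blast+
    also have "\<dots> = x p"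
      unfolding ins p_def by simp
    finally show ?thesis
      using True by simp
  next
    case False
    then have "x (insert_at b i w) = 0" for b
      using insert_at_keeps_adjacent Pch_vanishes_off_edge[OF xP av] by (metis w_def)
    then show ?thesis
      using False by simp
  qed
  have "bd V m x w = (-1) ^ Suc (length xs) * x p"
    using w_regular w_length p(2)
    by (simp add: bd_eq_bd_raw bd_raw_def face p_def)
  then have "bd V m x w \<noteq> 0"
    using nz by (simp add: minus_one_power_iff)
  then have "allowed_path V E w"
    using bdP by (auto simp: Pch_def)
  then show False
    using av allowed_path_edge by (metis w_def)
qed

lemma Omega_support_drop2_disjoint_Z:
  assumes "x \<in> Omega V E m" "x p \<noteq> 0"
  shows "set (drop 2 p) \<inter> Z = {}"
proof -
  have "v \<notin> Z" if "v \<in> set (drop 2 p)" for v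
    using in_set_drop2_decomp[OF that] Omega_vanishes_through_Z[OF assms(1)] assms(2) by metis
  then show ?thesis
    by blast
qed

lemma allowed_path_collapse_Cons_Cons:
  "allowed_path V' E' (q0 # q1 # r) \<longleftrightarrow>
    allowed_path V E (q0 # q1 # r) \<and> q0 \<notin> Z \<and> q1 \<notin> Z \<and> set r \<inter> Z = {}"
  unfolding allowed_path_collapse by auto

lemma unprefixed_support_in_collapse:
  assumes x: "x \<in> Omega V E m" and nz: "x q \<noteq> 0" and "hd q \<notin> Z" "\<not> in_nbr_prefixed q"
  shows "allowed_path V' E' q"
proof -
  have q: "allowed_path V E q"
    using x nz by (auto simp: Omega_def Pch_def)
  show ?thesis
  proof (cases q rule: remdups_adj.cases)
    case 1
    then show ?thesis
      using q by simp
  next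
    case (2 q0)
    then show ?thesis
      using q assms(3) unfolding allowed_path_collapse by simp
  next
    case (3 q0 q1 r)
    then have "q1 \<notin> Z"
      using q assms(3,4) in_nbr_unique by auto
    moreover have "set r \<inter> Z = {}"
      using Omega_support_drop2_disjoint_Z[OF x nz] 3 by (simp add: numeral_2_eq_2)
    ultimately show ?thesis
      using q assms(3) unfolding 3 allowed_path_collapse_Cons_Cons by simp
  qed
qed

lemma in_nbr_prefixed_support_in_collapse:
  assumes x: "x \<in> Omega V E m" and a: "a \<in> Z" and nz: "x (a # r) \<noteq> 0"
  shows "allowed_path V' E' (in_nbr a # r)"
proof (cases r)
  case Nil
  then show ?thesis
    using a in_nbr_in_V in_nbr_notin_Z unfolding allowed_path_collapse by simp
next
  case (Cons q1 r')
  have ar: "allowed_path V E (a # r)"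
    using x nz by (auto simp: Omega_def Pch_def)
  then have "q1 = out_nbr a"
    using Cons out_nbr_unique[OF a] by simp
  moreover have "set r' \<inter> Z = {}"
    using Omega_support_drop2_disjoint_Z[OF x nz] Cons by (simp add: numeral_2_eq_2)
  ultimately show ?thesis
    using ar Cons a in_nbr_in_V in_out_nbr_edge in_nbr_notin_Z out_nbr_notin_Z
    unfolding Cons allowed_path_collapse_Cons_Cons by simp
qed

lemma htpy_bd_support:
  assumes "htpy (bd V m x) q \<noteq> 0"
  shows "regular_seq q \<and> length q = Suc m"
proof -
  obtain c r where q: "q = in_nbr c # c # r" "c \<in> Z" and "bd V m x (c # r) \<noteq> 0"
    using assms by (cases q rule: remdups_adj.cases) (auto split: if_splits)
  then have "length (c # r) = m" "regular_seq (c # r)"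
    by (auto simp: bd_eq_bd_raw split: if_splits)
  then show ?thesis
    using q in_nbr_edge no_loop by (metis length_Cons regular_seq_simps(3))
qed

lemma homotopy_support_regular:
  assumes "x \<in> Pch V E m" and "x q - bd V (Suc m) (htpy x) q - htpy (bd V m x) q \<noteq> 0"
  shows "regular_seq q \<and> length q = Suc m"
proof (rule ccontr)
  assume "\<not> (regular_seq q \<and> length q = Suc m)"
  then have "x q = 0" "bd V (Suc m) (htpy x) q = 0" "htpy (bd V m x) q = 0"
    using assms(1) allowed_path_regular[OF no_loop] htpy_bd_support[of m x q]
    by (auto simp: Pch_def bd_eq_bd_raw)
  then show False
    using assms(2) by simp
qed

lemma homotopy_deforms_into_collapse:
  assumes x: "x \<in> Omega V E m"
  shows "(\<lambda>q. x q - bd V (Suc m) (htpy x) q - htpy (bd V m x) q) \<in> Pch V' E' m"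
  unfolding Pch_def
proof clarify
  fix q
  assume nz: "x q - bd V (Suc m) (htpy x) q - htpy (bd V m x) q \<noteq> 0"
  have xP: "x \<in> Pch V E m"
    using x by (simp add: Omega_def)
  have q: "regular_seq q \<and> length q = Suc m"
    using homotopy_support_regular[OF xP nz] .
  then obtain q0 r where qr: "q = q0 # r" "length r = m"
    by (cases q) auto
  have reg: "regular_seq (q0 # r)"
    using q qr by simp
  from nz have sum_nz: "(if q0 \<in> Z \<or> in_nbr_prefixed (q0 # r) then 0 else x (q0 # r))
      + (\<Sum>a\<in>V. if a \<in> Z \<and> q0 = in_nbr a then x (a # r) else 0) \<noteq> 0"
    unfolding qr(1) homotopy_formula[OF xP reg qr(2)] .
  consider "q0 \<notin> Z" "\<not> in_nbr_prefixed q" "x q \<noteq> 0"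
    | a where "a \<in> Z" "q0 = in_nbr a" "x (a # r) \<noteq> 0"
  proof (cases "q0 \<in> Z \<or> in_nbr_prefixed q \<or> x q = 0")
    case True
    then have "(\<Sum>a\<in>V. if a \<in> Z \<and> q0 = in_nbr a then x (a # r) else 0) \<noteq> 0"
      using sum_nz qr(1) by (auto split: if_splits)
    then obtain a where "a \<in> V" "(if a \<in> Z \<and> q0 = in_nbr a then x (a # r) else 0) \<noteq> 0"
      by (rule sum.not_neutral_contains_not_neutral)
    then show ?thesis
      using that(2) by (auto split: if_splits)
  qed (use that(1) in blast)
  then have "allowed_path V' E' q"
  proof cases
    case 1
    then show ?thesis
      using unprefixed_support_in_collapse[OF x] qr by simp
  next
    case 2
    then show ?thesis
      using in_nbr_prefixed_support_in_collapse[OF x] qr by simp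
  qed
  then show "length q = Suc m \<and> allowed_path V' E' q"
    using q by simp
qed

lemma cycle_homologous_to_collapse:
  assumes z: "z \<in> cycles V E n"
  shows "\<exists>z'\<in>cycles V' E' n. (\<lambda>p. z p - z' p) \<in> boundaries V E n"
proof -
  have zO: "z \<in> Omega V E n" and bz: "bd V n z = (\<lambda>_. 0)"
    using z by (auto simp: cycles_def)
  define z' where "z' = (\<lambda>q. z q - bd V (Suc n) (htpy z) q)"
  have z'P: "z' \<in> Pch V' E' n"
    using homotopy_deforms_into_collapse[OF zO] by (simp add: z'_def bz htpy_zero)
  have "bd V n z' = (\<lambda>_. 0)"
    unfolding z'_def bd_diff bz bd_bd[OF finite_V] by simp
  then have z'C: "z' \<in> cycles V' E' n"
    using z'P Pch_zero bd_sub[OF z'P] by (simp add: cycles_def Omega_def)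
  have bd_htpy_z: "bd V (Suc n) (htpy z) = (\<lambda>q. z q - z' q)"
    by (simp add: z'_def)
  have "htpy z \<in> Omega V E (Suc n)"
    using htpy_Pch Pch_diff[OF _ subsetD[OF Pch_mono z'P]] zO bd_htpy_z by (auto simp: Omega_def)
  then have "(\<lambda>q. z q - z' q) \<in> boundaries V E n"
    unfolding boundaries_def bd_htpy_z[symmetric] by (rule imageI)
  then show ?thesis
    using z'C by blast
qed

lemma collapse_cycle_bounds_in_collapse:
  assumes z: "z \<in> cycles V' E' n" and zb: "z \<in> boundaries V E n"
  shows "z \<in> boundaries V' E' n"
proof -
  obtain c where cO: "c \<in> Omega V E (Suc n)" and zc: "z = bd V (Suc n) c"
    using zb by (auto simp: boundaries_def)
  have zP: "z \<in> Pch V' E' n"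
    using z by (simp add: cycles_def Omega_def)
  define c' where "c' = (\<lambda>q. c q - bd V (Suc (Suc n)) (htpy c) q)"
  have c'P: "c' \<in> Pch V' E' (Suc n)"
    using homotopy_deforms_into_collapse[OF cO] htpy_vanishes[OF zP] zc by (simp add: c'_def)
  have "bd V (Suc n) c' = z"
    unfolding c'_def bd_diff bd_bd[OF finite_V] zc by simp
  then have "bd V' (Suc n) c' = z"
    using bd_sub[OF c'P] by simp
  moreover have "c' \<in> Omega V' E' (Suc n)"
    using c'P zP calculation by (simp add: Omega_def)
  ultimately show ?thesis
    unfolding boundaries_def by blast
qed

end

theorem theorem1p2:
  fixes V :: "'a set" and E :: "('a \<times> 'a) set" and f :: "'a \<Rightarrow> real"
  assumes "finite_digraph V E"
    and "discrete_morse V E f"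
    and "zero_deg_hyp V E f"
  shows "\<forall>n. bij_betw (induced_map V E n)
           (path_homology (collapse_V V E f) (collapse_E V E f) n
              :: ('a list \<Rightarrow> 'r::comm_ring_1) set set)
           (path_homology V E n)"
proof
  fix n
  interpret collapse V E f
    using assms(1,3) by unfold_locales
  show "bij_betw (induced_map V E n)
      (path_homology (collapse_V V E f) (collapse_E V E f) n :: ('a list \<Rightarrow> 'r) set set)
      (path_homology V E n)"
    using bij_betw_induced_map cycle_homologous_to_collapse collapse_cycle_bounds_in_collapse
    by blast
qed

end
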